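(* The polynomial $\Delta(\mathbf{x})=\prod_{i<j}(x_i-x_j)$ generates $\DH_n^{\mathrm{sgn}}$ under the action of $\mathbb{C}[F_1^*,\dots,F_{n-1}^*]$, and the polynomial $\Delta(\mathbf{y})=\prod_{i<j}(y_i-y_j)$ generates $\DH_n^{\mathrm{sgn}}$ under the action of $\mathbb{C}[E_1^*,\dots,E_{n-1}^*]$.
   Context: $S_n$ acts on $\mathbb{C}[\mathbf x,\mathbf y]=\mathbb{C}[x_1,\dots,x_n,y_1,\dots,y_n]$ by permuting the $x_i$ and $y_i$ simultaneously; $\mathbb{C}[\mathbf x,\mathbf y]^{S_n}_+$ is the ideal generated by homogeneous symmetric polynomials of positive degree. The space of diagonal harmonics is $\DH_n=\{f\in\mathbb{C}[\mathbf x,\mathbf y]: g(\partial_{\mathbf x},\partial_{\mathbf y})f=0\ \forall g\in\mathbb{C}[\mathbf x,\mathbf y]^{S_n}_+\}$, and $\DH_n^{\mathrm{sgn}}$ is its sign-isotypic component (antisymmetric elements). $F_k^*=\sum_{i=1}^n y_i\partial_{x_i}^k$ and $E_k^*=\sum_{i=1}^n x_i\partial_{y_i}^k$. (Haiman's theorem, used as known: $\Delta(\mathbf x)$ generates $\DH_n$ under $\mathbb{C}[F_1^*,\dots,F_{n-1}^*,\partial_{x_1},\dots,\partial_{x_n}]$, and symmetrically for $\Delta(\mathbf y)$.) *)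

theory Defs
  imports Complex_Main "HOL-Library.Poly_Mapping" "HOL-Combinatorics.Permutations"
begin

text \<open>Variables: Inl i stands for x_i, Inr i stands for y_i (indices i < n).\<close>

type_synonym var = "nat + nat"
type_synonym mono = "var \<Rightarrow>\<^sub>0 nat"
type_synonym cpoly = "mono \<Rightarrow>\<^sub>0 complex"

definition Var :: "var \<Rightarrow> cpoly" where
  "Var v = Poly_Mapping.single (Poly_Mapping.single v 1) 1"

definition const :: "complex \<Rightarrow> cpoly" where
  "const c = Poly_Mapping.single 0 c"

definition X :: "nat \<Rightarrow> cpoly" where "X i = Var (Inl i)"
definition Y :: "nat \<Rightarrow> cpoly" where "Y i = Var (Inr i)"

text \<open>The variable set of C[x_1..x_n,y_1..y_n] (0-based indices).\<close>
definition vars_n :: "nat \<Rightarrow> var set" where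
  "vars_n n = Inl ` {..<n} \<union> Inr ` {..<n}"

definition vars :: "cpoly \<Rightarrow> var set" where
  "vars p = (\<Union>t\<in>Poly_Mapping.keys p. Poly_Mapping.keys (t :: mono))"

definition polys :: "nat \<Rightarrow> cpoly set" where
  "polys n = {p. vars p \<subseteq> vars_n n}"

definition dmono :: "mono \<Rightarrow> cpoly \<Rightarrow> cpoly" where
  "dmono m p = (\<Sum>t\<in>Poly_Mapping.keys p.
      (if (\<forall>v. Poly_Mapping.lookup m v \<le> Poly_Mapping.lookup t v)
       then Poly_Mapping.single (t - m)
              (Poly_Mapping.lookup p t * (\<Prod>v\<in>Poly_Mapping.keys m. of_nat (fact (Poly_Mapping.lookup t v) div fact (Poly_Mapping.lookup t v - Poly_Mapping.lookup m v))))
       else 0))"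

definition pd :: "var \<Rightarrow> cpoly \<Rightarrow> cpoly" where
  "pd v = dmono (Poly_Mapping.single v 1)"

definition diffop :: "cpoly \<Rightarrow> cpoly \<Rightarrow> cpoly" where
  "diffop g f = (\<Sum>m\<in>Poly_Mapping.keys g. const (Poly_Mapping.lookup g m) * dmono m f)"

definition permvar :: "(nat \<Rightarrow> nat) \<Rightarrow> var \<Rightarrow> var" where
  "permvar \<sigma> v = (case v of Inl i \<Rightarrow> Inl (\<sigma> i) | Inr i \<Rightarrow> Inr (\<sigma> i))"

definition permmono :: "(nat \<Rightarrow> nat) \<Rightarrow> mono \<Rightarrow> mono" where
  "permmono \<sigma> t = (\<Sum>v\<in>Poly_Mapping.keys t. Poly_Mapping.single (permvar \<sigma> v) (Poly_Mapping.lookup t v))"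

definition permpoly :: "(nat \<Rightarrow> nat) \<Rightarrow> cpoly \<Rightarrow> cpoly" where
  "permpoly \<sigma> p = (\<Sum>t\<in>Poly_Mapping.keys p. Poly_Mapping.single (permmono \<sigma> t) (Poly_Mapping.lookup p t))"

definition symmetric :: "nat \<Rightarrow> cpoly \<Rightarrow> bool" where
  "symmetric n p \<longleftrightarrow> (\<forall>\<sigma>. \<sigma> permutes {..<n} \<longrightarrow> permpoly \<sigma> p = p)"

definition antisymmetric :: "nat \<Rightarrow> cpoly \<Rightarrow> bool" where
  "antisymmetric n p \<longleftrightarrow>
     (\<forall>\<sigma>. \<sigma> permutes {..<n} \<longrightarrow> permpoly \<sigma> p = const (of_int (sign \<sigma>)) * p)"

definition mdeg :: "mono \<Rightarrow> nat" where
  "mdeg t = (\<Sum>v\<in>Poly_Mapping.keys t. Poly_Mapping.lookup t v)"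

definition homogeneous :: "nat \<Rightarrow> cpoly \<Rightarrow> bool" where
  "homogeneous d p \<longleftrightarrow> (\<forall>t\<in>Poly_Mapping.keys p. mdeg t = d)"

definition sym_gens :: "nat \<Rightarrow> cpoly set" where
  "sym_gens n = {s. s \<in> polys n \<and> symmetric n s \<and> (\<exists>d>0. homogeneous d s)}"

definition sym_ideal :: "nat \<Rightarrow> cpoly set" where
  "sym_ideal n = {p. \<exists>hs :: (cpoly \<times> cpoly) list.
      (\<forall>(h, s)\<in>set hs. h \<in> polys n \<and> s \<in> sym_gens n) \<and> p = (\<Sum>(h, s)\<leftarrow>hs. h * s)}"

definition DH :: "nat \<Rightarrow> cpoly set" where
  "DH n = {f \<in> polys n. \<forall>g\<in>sym_ideal n. diffop g f = 0}"

definition DH_sgn :: "nat \<Rightarrow> cpoly set" where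
  "DH_sgn n = {f \<in> DH n. antisymmetric n f}"

definition Delta_x :: "nat \<Rightarrow> cpoly" where
  "Delta_x n = (\<Prod>(i, j)\<in>{(i, j). i < j \<and> j < n}. X i - X j)"

definition Delta_y :: "nat \<Rightarrow> cpoly" where
  "Delta_y n = (\<Prod>(i, j)\<in>{(i, j). i < j \<and> j < n}. Y i - Y j)"

definition Fstar :: "nat \<Rightarrow> nat \<Rightarrow> cpoly \<Rightarrow> cpoly" where
  "Fstar n k f = (\<Sum>i<n. Y i * dmono (Poly_Mapping.single (Inl i) k) f)"

definition Estar :: "nat \<Rightarrow> nat \<Rightarrow> cpoly \<Rightarrow> cpoly" where
  "Estar n k f = (\<Sum>i<n. X i * dmono (Poly_Mapping.single (Inr i) k) f)"

text \<open>The C[ops]-module generated by p0: smallest C-subspace containing p0 and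
  stable under each operator in ops (for commuting operators this is
  {P(ops) p0 | P polynomial}).\<close>
inductive_set generated :: "(cpoly \<Rightarrow> cpoly) set \<Rightarrow> cpoly \<Rightarrow> cpoly set"
  for ops p0 where
  base: "p0 \<in> generated ops p0"
| add: "p \<in> generated ops p0 \<Longrightarrow> q \<in> generated ops p0 \<Longrightarrow> p + q \<in> generated ops p0"
| smult: "p \<in> generated ops p0 \<Longrightarrow> const c * p \<in> generated ops p0"
| op: "T \<in> ops \<Longrightarrow> p \<in> generated ops p0 \<Longrightarrow> T p \<in> generated ops p0"

end

theory Submission
  imports Defs
begin

text \<open>The polarization operators \<open>F\<^sub>k\<^sup>*\<close> differentiate only in \<open>x\<close> and multiply by \<open>y\<close>, so they
  commute with every \<open>\<partial>\<^sub>x\<^sub>i\<close>. By Haiman's theorem every diagonal harmonic is therefore a linear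
  combination of words in the \<open>F\<^sub>k\<^sup>*\<close> applied to derivatives \<open>\<partial>\<^sup>m \<Delta>(x)\<close>. Antisymmetrization
  commutes with the \<open>F\<^sub>k\<^sup>*\<close>, multiplies an alternating polynomial by \<open>n!\<close>, and sends \<open>\<partial>\<^sup>m \<Delta>\<close> to
  \<open>g(\<partial>) \<Delta>\<close> with \<open>g\<close> the symmetrized monomial \<open>x\<^sup>m\<close>; for \<open>m \<noteq> 0\<close> this vanishes because \<open>\<Delta>\<close>
  is harmonic. So each alternating harmonic lies in the \<open>\<complex>[F\<^sup>*]\<close>-span of \<open>\<Delta>(x)\<close>, and conversely
  this span consists of alternating harmonics. The same argument with \<open>x\<close> and \<open>y\<close> exchanged
  handles \<open>\<Delta>(y)\<close> and the \<open>E\<^sub>k\<^sup>*\<close>.\<close>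

lemma lookup_const_mult: "Poly_Mapping.lookup (const c * p) t = c * Poly_Mapping.lookup p t"
proof -
  have "const c * p = Poly_Mapping.map ((*) c) p"
    unfolding const_def by (simp add: mult_map_scale_conv_mult)
  moreover have "Poly_Mapping.lookup (Poly_Mapping.map ((*) c) p) t = c * Poly_Mapping.lookup p t"
    by transfer (simp add: when_def)
  ultimately show ?thesis by simp
qed

lemma const_mult_single: "const c * Poly_Mapping.single t d = Poly_Mapping.single t (c * d)"
  unfolding const_def by (simp add: mult_single)

lemma const_mult_const: "const c * const d = const (c * d)"
  by (simp add: const_def mult_single)

lemma const_0 [simp]: "const 0 = 0"
  by (simp add: const_def)

lemma const_1 [simp]: "const 1 = 1"
  by (simp add: const_def)

lemma const_of_nat: "const (of_nat k) = of_nat k"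
  by (simp add: const_def)

lemma const_of_int: "const (of_int k) = of_int k"
  by (simp add: const_def)

lemma poly_mapping_sum_single:
  "(p :: 'a \<Rightarrow>\<^sub>0 'b::comm_monoid_add) = (\<Sum>t\<in>Poly_Mapping.keys p. Poly_Mapping.single t (Poly_Mapping.lookup p t))"
  by (rule poly_mapping_eqI) (simp add: lookup_sum lookup_single when_def in_keys_iff)

lemma poly_mapping_single_induct [case_names zero single add]:
  fixes p :: "'a \<Rightarrow>\<^sub>0 'b::comm_monoid_add"
  assumes "P 0" "\<And>t c. P (Poly_Mapping.single t c)" "\<And>p q. P p \<Longrightarrow> P q \<Longrightarrow> P (p + q)"
  shows "P p"
proof -
  have "P (\<Sum>t\<in>K. Poly_Mapping.single t (Poly_Mapping.lookup p t))" if "finite K" for K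
    using that by (induction K rule: finite_induct) (auto intro: assms)
  then show ?thesis by (subst poly_mapping_sum_single) simp
qed

section \<open>Partial derivatives\<close>

definition mono_dvd :: "mono \<Rightarrow> mono \<Rightarrow> bool" where
  "mono_dvd m t \<longleftrightarrow> (\<forall>v. Poly_Mapping.lookup m v \<le> Poly_Mapping.lookup t v)"

definition deriv_coeff :: "mono \<Rightarrow> mono \<Rightarrow> complex" where
  "deriv_coeff m t = (\<Prod>v\<in>Poly_Mapping.keys m.
     of_nat (fact (Poly_Mapping.lookup t v) div fact (Poly_Mapping.lookup t v - Poly_Mapping.lookup m v)))"

lemma dmono_eq_sum_superset:
  assumes "finite K" "Poly_Mapping.keys p \<subseteq> K"
  shows "dmono m p = (\<Sum>t\<in>K. if mono_dvd m t
           then Poly_Mapping.single (t - m) (Poly_Mapping.lookup p t * deriv_coeff m t) else 0)"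
  unfolding dmono_def mono_dvd_def deriv_coeff_def
  by (rule sum.mono_neutral_left[OF assms]) (auto simp: in_keys_iff)

lemma dmono_single:
  "dmono m (Poly_Mapping.single t c) =
     (if mono_dvd m t then Poly_Mapping.single (t - m) (c * deriv_coeff m t) else 0)"
  by (subst dmono_eq_sum_superset[of "{t}"]) auto

lemma dmono_poly_0 [simp]: "dmono m 0 = 0"
  by (simp add: dmono_def)

lemma dmono_add: "dmono m (p + q) = dmono m p + dmono m q"
proof -
  let ?K = "Poly_Mapping.keys p \<union> Poly_Mapping.keys q"
  have keys: "Poly_Mapping.keys (p + q) \<subseteq> ?K" by (rule keys_add)
  show ?thesis
    unfolding dmono_eq_sum_superset[OF _ keys, simplified] dmono_eq_sum_superset[of ?K p, simplified]
      dmono_eq_sum_superset[of ?K q, simplified] sum.distrib[symmetric]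
    by (intro sum.cong) (auto simp: lookup_add single_add distrib_right)
qed

lemma dmono_const_mult: "dmono m (const c * p) = const c * dmono m p"
  by (induction p rule: poly_mapping_single_induct)
     (auto simp: dmono_single const_mult_single mult.assoc distrib_left dmono_add)

lemma dmono_sum: "dmono m (\<Sum>i\<in>I. f i) = (\<Sum>i\<in>I. dmono m (f i))"
  by (induction I rule: infinite_finite_induct) (auto simp: dmono_add)

lemma dmono_0: "dmono 0 p = p"
  by (induction p rule: poly_mapping_single_induct)
     (auto simp: dmono_single mono_dvd_def deriv_coeff_def dmono_add)

lemma deriv_coeff_eq_prod_superset:
  assumes "finite K" "Poly_Mapping.keys m \<subseteq> K"
  shows "deriv_coeff m t = (\<Prod>v\<in>K.
     of_nat (fact (Poly_Mapping.lookup t v) div fact (Poly_Mapping.lookup t v - Poly_Mapping.lookup m v)))"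
  unfolding deriv_coeff_def
  by (rule prod.mono_neutral_left[OF assms]) (auto simp: in_keys_iff)

lemma fact_div_fact_mult:
  assumes "b + c \<le> (a::nat)"
  shows "(fact a div fact (a - b)) * (fact (a - b) div fact (a - b - c)) = (fact a div fact (a - (c + b)) :: nat)"
proof -
  have "fact (a - b - c) dvd (fact (a - b) :: nat)" "fact (a - b) dvd (fact a :: nat)"
    by (simp_all add: fact_dvd)
  then obtain x y where x: "fact (a - b) = fact (a - b - c) * (x::nat)"
    and y: "fact a = fact (a - b) * (y::nat)"
    unfolding dvd_def by blast
  have "a - (c + b) = a - b - c" by simp
  then show ?thesis by (simp add: x y mult.assoc)
qed

lemma mono_dvd_diff_iff: "mono_dvd m' t \<Longrightarrow> mono_dvd m (t - m') \<longleftrightarrow> mono_dvd (m + m') t"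
  unfolding mono_dvd_def lookup_add lookup_minus by (simp add: le_diff_conv2)

lemma mono_dvd_add_rightD: "mono_dvd (m + m') t \<Longrightarrow> mono_dvd m' t"
  unfolding mono_dvd_def lookup_add by (meson add_leE)

lemma deriv_coeff_add:
  assumes "mono_dvd (m + m') t"
  shows "deriv_coeff m' t * deriv_coeff m (t - m') = deriv_coeff (m + m') t"
proof -
  let ?K = "Poly_Mapping.keys m \<union> Poly_Mapping.keys m'"
  let ?l = "Poly_Mapping.lookup"
  have "deriv_coeff m' t * deriv_coeff m (t - m') =
      (\<Prod>v\<in>?K. of_nat (fact (?l t v) div fact (?l t v - ?l m' v)
                  * (fact (?l t v - ?l m' v) div fact (?l t v - ?l m' v - ?l m v))))"
    by (simp add: deriv_coeff_eq_prod_superset[of ?K] prod.distrib lookup_minus)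
  also have "\<dots> = (\<Prod>v\<in>?K. of_nat (fact (?l t v) div fact (?l t v - ?l (m + m') v)))"
  proof (intro prod.cong refl arg_cong[where f = of_nat])
    fix v
    have "?l m' v + ?l m v \<le> ?l t v"
      using assms by (simp add: mono_dvd_def lookup_add add.commute)
    from fact_div_fact_mult[OF this]
    show "fact (?l t v) div fact (?l t v - ?l m' v) * (fact (?l t v - ?l m' v) div fact (?l t v - ?l m' v - ?l m v))
        = (fact (?l t v) div fact (?l t v - ?l (m + m') v) :: nat)"
      by (simp add: lookup_add add.commute)
  qed
  also have "\<dots> = deriv_coeff (m + m') t"
    using keys_add[of m m'] by (simp add: deriv_coeff_eq_prod_superset[of ?K])
  finally show ?thesis .
qed

lemma dmono_dmono: "dmono m (dmono m' p) = dmono (m + m') p"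
proof (induction p rule: poly_mapping_single_induct)
  case (single t c)
  have "t - m' - m = t - (m + m')" by (simp add: diff_diff_add add.commute)
  then show ?case
    by (auto simp: dmono_single mono_dvd_diff_iff deriv_coeff_add[symmetric] mult.assoc
        dest: mono_dvd_add_rightD)
qed (simp_all add: dmono_add)

lemma dmono_Var_mult:
  assumes "w \<notin> Poly_Mapping.keys m"
  shows "dmono m (Var w * q) = Var w * dmono m q"
proof (induction q rule: poly_mapping_single_induct)
  case (single t c)
  let ?u = "Poly_Mapping.single w (1::nat)"
  have mw: "Poly_Mapping.lookup m w = 0" using assms by (simp add: in_keys_iff)
  have dvd: "mono_dvd m (?u + t) \<longleftrightarrow> mono_dvd m t"
  proof -
    have "Poly_Mapping.lookup m v \<le> Poly_Mapping.lookup (?u + t) v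
        \<longleftrightarrow> Poly_Mapping.lookup m v \<le> Poly_Mapping.lookup t v" for v
      by (cases "v = w") (simp_all add: mw lookup_add lookup_single)
    then show ?thesis unfolding mono_dvd_def by presburger
  qed
  have coeff: "deriv_coeff m (?u + t) = deriv_coeff m t"
    unfolding deriv_coeff_def using assms
    by (intro prod.cong refl) (auto simp: lookup_add lookup_single when_def)
  have diff: "?u + t - m = ?u + (t - m)" if "mono_dvd m t"
    using that mw unfolding mono_dvd_def
    by (intro poly_mapping_eqI) (simp add: lookup_add lookup_minus lookup_single when_def)
  have shift: "Var w * Poly_Mapping.single t c = Poly_Mapping.single (?u + t) c"
    by (simp add: Var_def mult_single)
  show ?case
  proof (cases "mono_dvd m t")
    case True
    show ?thesis
      unfolding shift dmono_single dvd coeff if_P[OF True] diff[OF True] Var_def mult_single by simp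
  qed (simp only: shift dmono_single dvd coeff if_False, simp)
qed (simp_all add: dmono_add distrib_left)

section \<open>The diagonal action of permutations\<close>

lemma permvar_comp: "permvar (f \<circ> g) = permvar f \<circ> permvar g"
  by (auto simp: fun_eq_iff permvar_def split: sum.splits)

lemma permvar_permvar_inv: "bij \<sigma> \<Longrightarrow> permvar \<sigma> (permvar (inv \<sigma>) v) = v"
  by (auto simp: permvar_def bij_is_surj surj_f_inv_f split: sum.splits)

lemma permvar_inv_permvar: "bij \<sigma> \<Longrightarrow> permvar (inv \<sigma>) (permvar \<sigma> v) = v"
  by (auto simp: permvar_def bij_is_inj inv_f_f split: sum.splits)

lemma permvar_eq_iff: "bij \<sigma> \<Longrightarrow> permvar \<sigma> w = v \<longleftrightarrow> w = permvar (inv \<sigma>) v"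
  using permvar_permvar_inv permvar_inv_permvar by metis

lemma inj_on_permvar: "bij \<sigma> \<Longrightarrow> inj_on (permvar \<sigma>) A"
  by (metis inj_on_inverseI permvar_inv_permvar)

lemma permvar_vars_n: "\<sigma> permutes {..<n} \<Longrightarrow> v \<in> vars_n n \<Longrightarrow> permvar \<sigma> v \<in> vars_n n"
  using permutes_in_image[of \<sigma> "{..<n}"] by (cases v) (auto simp: vars_n_def permvar_def)

lemma lookup_permmono:
  "bij \<sigma> \<Longrightarrow> Poly_Mapping.lookup (permmono \<sigma> t) v = Poly_Mapping.lookup t (permvar (inv \<sigma>) v)"
  unfolding permmono_def lookup_sum lookup_single
  by (simp add: permvar_eq_iff when_def in_keys_iff)

lemma keys_permmono: "bij \<sigma> \<Longrightarrow> Poly_Mapping.keys (permmono \<sigma> t) = permvar \<sigma> ` Poly_Mapping.keys t"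
proof -
  assume \<sigma>: "bij \<sigma>"
  have "v \<in> permvar \<sigma> ` K \<longleftrightarrow> permvar (inv \<sigma>) v \<in> K" for v K
    unfolding image_iff by (metis permvar_permvar_inv[OF \<sigma>] permvar_inv_permvar[OF \<sigma>])
  then show ?thesis using \<sigma> by (auto simp: in_keys_iff lookup_permmono permvar_inv_permvar)
qed

lemma permmono_0 [simp]: "bij \<sigma> \<Longrightarrow> permmono \<sigma> 0 = 0"
  by (rule poly_mapping_eqI) (simp add: lookup_permmono)

lemma permmono_add: "bij \<sigma> \<Longrightarrow> permmono \<sigma> (s + t) = permmono \<sigma> s + permmono \<sigma> t"
  by (rule poly_mapping_eqI) (simp add: lookup_permmono lookup_add)

lemma permmono_diff: "bij \<sigma> \<Longrightarrow> permmono \<sigma> (s - t) = permmono \<sigma> s - permmono \<sigma> t"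
  by (rule poly_mapping_eqI) (simp add: lookup_permmono lookup_minus)

lemma permmono_single:
  "bij \<sigma> \<Longrightarrow> permmono \<sigma> (Poly_Mapping.single v k) = Poly_Mapping.single (permvar \<sigma> v) k"
  by (rule poly_mapping_eqI) (auto simp: lookup_permmono lookup_single when_def permvar_eq_iff)

lemma permmono_permmono_inv: "bij \<sigma> \<Longrightarrow> permmono \<sigma> (permmono (inv \<sigma>) t) = t"
  by (rule poly_mapping_eqI) (simp add: lookup_permmono bij_imp_bij_inv inv_inv_eq permvar_permvar_inv)

lemma permmono_inv_permmono: "bij \<sigma> \<Longrightarrow> permmono (inv \<sigma>) (permmono \<sigma> t) = t"
  by (rule poly_mapping_eqI) (simp add: lookup_permmono bij_imp_bij_inv inv_inv_eq permvar_inv_permvar)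

lemma permmono_eq_iff: "bij \<sigma> \<Longrightarrow> permmono \<sigma> w = v \<longleftrightarrow> w = permmono (inv \<sigma>) v"
  using permmono_permmono_inv permmono_inv_permmono by metis

lemma permmono_permmono: "bij \<sigma> \<Longrightarrow> bij \<tau> \<Longrightarrow> permmono \<sigma> (permmono \<tau> t) = permmono (\<sigma> \<circ> \<tau>) t"
  by (rule poly_mapping_eqI)
     (simp add: lookup_permmono bij_comp o_inv_distrib permvar_comp bij_is_inj bij_is_surj)

lemma mdeg_permmono: "bij \<sigma> \<Longrightarrow> mdeg (permmono \<sigma> m) = mdeg m"
  unfolding mdeg_def keys_permmono
  by (subst sum.reindex) (simp_all add: inj_on_permvar lookup_permmono permvar_inv_permvar)

lemma mono_dvd_permmono: "bij \<sigma> \<Longrightarrow> mono_dvd (permmono \<sigma> m) (permmono \<sigma> t) \<longleftrightarrow> mono_dvd m t"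
  unfolding mono_dvd_def lookup_permmono by (metis permvar_inv_permvar)

lemma deriv_coeff_permmono: "bij \<sigma> \<Longrightarrow> deriv_coeff (permmono \<sigma> m) (permmono \<sigma> t) = deriv_coeff m t"
  unfolding deriv_coeff_def keys_permmono
  by (subst prod.reindex) (simp_all add: inj_on_permvar lookup_permmono permvar_inv_permvar)

lemma lookup_permpoly:
  "bij \<sigma> \<Longrightarrow> Poly_Mapping.lookup (permpoly \<sigma> p) s = Poly_Mapping.lookup p (permmono (inv \<sigma>) s)"
  unfolding permpoly_def lookup_sum lookup_single
  by (simp add: permmono_eq_iff when_def in_keys_iff)

lemma permpoly_0 [simp]: "bij \<sigma> \<Longrightarrow> permpoly \<sigma> 0 = 0"
  by (rule poly_mapping_eqI) (simp add: lookup_permpoly)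

lemma permpoly_add: "bij \<sigma> \<Longrightarrow> permpoly \<sigma> (p + q) = permpoly \<sigma> p + permpoly \<sigma> q"
  by (rule poly_mapping_eqI) (simp add: lookup_permpoly lookup_add)

lemma permpoly_diff: "bij \<sigma> \<Longrightarrow> permpoly \<sigma> (p - q) = permpoly \<sigma> p - permpoly \<sigma> q"
  by (rule poly_mapping_eqI) (simp add: lookup_permpoly lookup_minus)

lemma permpoly_const_mult: "bij \<sigma> \<Longrightarrow> permpoly \<sigma> (const c * p) = const c * permpoly \<sigma> p"
  by (rule poly_mapping_eqI) (simp add: lookup_permpoly lookup_const_mult)

lemma permpoly_sum: "bij \<sigma> \<Longrightarrow> permpoly \<sigma> (\<Sum>i\<in>I. f i) = (\<Sum>i\<in>I. permpoly \<sigma> (f i))"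
  by (induction I rule: infinite_finite_induct) (auto simp: permpoly_add)

lemma permpoly_single:
  "bij \<sigma> \<Longrightarrow> permpoly \<sigma> (Poly_Mapping.single t c) = Poly_Mapping.single (permmono \<sigma> t) c"
  by (rule poly_mapping_eqI) (auto simp: lookup_permpoly lookup_single when_def permmono_eq_iff)

lemma permpoly_1 [simp]: "bij \<sigma> \<Longrightarrow> permpoly \<sigma> 1 = 1"
  by (metis permpoly_single permmono_0 single_one)

lemma permpoly_Var: "bij \<sigma> \<Longrightarrow> permpoly \<sigma> (Var v) = Var (permvar \<sigma> v)"
  by (simp add: Var_def permpoly_single permmono_single)

lemma permpoly_mult: "bij \<sigma> \<Longrightarrow> permpoly \<sigma> (p * q) = permpoly \<sigma> p * permpoly \<sigma> q"
proof (induction p rule: poly_mapping_single_induct)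
  case (single s c)
  then show ?case
    by (induction q rule: poly_mapping_single_induct)
       (simp_all add: mult_single permpoly_single permmono_add distrib_left permpoly_add)
qed (simp_all add: distrib_right permpoly_add)

lemma permpoly_prod: "bij \<sigma> \<Longrightarrow> permpoly \<sigma> (\<Prod>i\<in>I. f i) = (\<Prod>i\<in>I. permpoly \<sigma> (f i))"
  by (induction I rule: infinite_finite_induct) (auto simp: permpoly_mult)

lemma permpoly_dmono: "bij \<sigma> \<Longrightarrow> permpoly \<sigma> (dmono m p) = dmono (permmono \<sigma> m) (permpoly \<sigma> p)"
  by (induction p rule: poly_mapping_single_induct)
     (simp_all add: dmono_single permpoly_single mono_dvd_permmono deriv_coeff_permmono permmono_diff
       dmono_add permpoly_add)

lemma diffop_eq_sum_superset:
  assumes "finite K" "Poly_Mapping.keys g \<subseteq> K"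
  shows "diffop g f = (\<Sum>m\<in>K. const (Poly_Mapping.lookup g m) * dmono m f)"
  unfolding diffop_def
  by (rule sum.mono_neutral_left[OF assms]) (auto simp: in_keys_iff)

lemma diffop_0 [simp]: "diffop 0 f = 0"
  by (simp add: diffop_def)

lemma diffop_single: "diffop (Poly_Mapping.single m c) f = const c * dmono m f"
  by (subst diffop_eq_sum_superset[of "{m}"]) auto

lemma diffop_add: "diffop (g + h) f = diffop g f + diffop h f"
proof -
  let ?K = "Poly_Mapping.keys g \<union> Poly_Mapping.keys h"
  have keys: "Poly_Mapping.keys (g + h) \<subseteq> ?K" by (rule keys_add)
  show ?thesis
    unfolding diffop_eq_sum_superset[OF _ keys, simplified] diffop_eq_sum_superset[of ?K g, simplified]
      diffop_eq_sum_superset[of ?K h, simplified] sum.distrib[symmetric]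
    by (rule sum.cong) (auto simp: lookup_add const_def single_add distrib_right)
qed

lemma diffop_sum: "diffop (\<Sum>i\<in>I. g i) f = (\<Sum>i\<in>I. diffop (g i) f)"
  by (induction I rule: infinite_finite_induct) (auto simp: diffop_add)

section \<open>The Vandermonde product\<close>

definition vandermonde :: "nat \<Rightarrow> (nat \<Rightarrow> 'a::comm_ring_1) \<Rightarrow> 'a" where
  "vandermonde n x = (\<Prod>(i, j)\<in>{(i, j). i < j \<and> j < n}. x i - x j)"

lemma finite_index_pairs: "finite {(i, j). i < j \<and> j < (n::nat)}"
  by (rule finite_subset[of _ "{..<n} \<times> {..<n}"]) auto

lemma vandermonde_transpose_Suc:
  assumes "Suc a < n"
  shows "vandermonde n (x \<circ> Transposition.transpose a (Suc a)) = - vandermonde n x"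
proof -
  let ?s = "Transposition.transpose a (Suc a)"
  let ?P = "{(i, j). i < j \<and> j < n}"
  let ?Q = "?P - {(a, Suc a)}"
  let ?h = "\<lambda>(i, j). (?s i, ?s j)"
  let ?g = "\<lambda>(i, j). x i - x j"
  have mem: "(a, Suc a) \<in> ?P" using assms by auto
  \<comment> \<open>swapping two adjacent indices permutes the other factors and flips the sign of one\<close>
  have "?h p \<in> ?Q" if "p \<in> ?Q" for p
    using that assms by (cases p) (auto simp: Transposition.transpose_def)
  moreover have "?h (?h p) = p" for p
    by (cases p) (auto simp: Transposition.transpose_def)
  ultimately have bij: "bij_betw ?h ?Q ?Q"
    by (intro bij_betwI[where g = ?h]) auto
  have "vandermonde n (x \<circ> ?s) = (\<Prod>p\<in>?P. ?g (?h p))"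
    unfolding vandermonde_def by (rule prod.cong) auto
  also have "\<dots> = ?g (?h (a, Suc a)) * (\<Prod>p\<in>?Q. ?g (?h p))"
    by (rule prod.remove[OF finite_index_pairs mem])
  also have "\<dots> = - (?g (a, Suc a) * (\<Prod>p\<in>?Q. ?g p))"
    by (simp add: prod.reindex_bij_betw[OF bij] algebra_simps)
  also have "?g (a, Suc a) * (\<Prod>p\<in>?Q. ?g p) = vandermonde n x"
    unfolding vandermonde_def by (rule prod.remove[OF finite_index_pairs mem, symmetric])
  finally show ?thesis .
qed

lemma vandermonde_transpose_add:
  "a + Suc d < n \<Longrightarrow> vandermonde n (x \<circ> Transposition.transpose a (a + Suc d)) = - vandermonde n x"
proof (induction d arbitrary: a x)
  case 0
  then show ?case using vandermonde_transpose_Suc[of a n x] by (simp only: add_Suc_right add_0_right)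
next
  case (Suc d)
  let ?s = "Transposition.transpose a (Suc a)"
  let ?t = "Transposition.transpose (Suc a) (Suc a + Suc d)"
  have "Transposition.transpose a (a + Suc (Suc d)) = ?s \<circ> ?t \<circ> ?s"
    by (auto simp: fun_eq_iff Transposition.transpose_def)
  then have "vandermonde n (x \<circ> Transposition.transpose a (a + Suc (Suc d)))
      = vandermonde n (x \<circ> ?s \<circ> ?t \<circ> ?s)"
    by (simp only: o_assoc)
  also have "\<dots> = - vandermonde n (x \<circ> ?s \<circ> ?t)"
    by (rule vandermonde_transpose_Suc) (use Suc.prems in simp)
  also have "vandermonde n (x \<circ> ?s \<circ> ?t) = - vandermonde n (x \<circ> ?s)"
    by (rule Suc.IH) (use Suc.prems in simp)
  also have "vandermonde n (x \<circ> ?s) = - vandermonde n x"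
    by (rule vandermonde_transpose_Suc) (use Suc.prems in simp)
  finally show ?case by (simp only: minus_minus)
qed

lemma vandermonde_transpose:
  assumes "a < n" "b < n" "a \<noteq> b"
  shows "vandermonde n (x \<circ> Transposition.transpose a b) = - vandermonde n x"
proof (cases "a < b")
  case True
  then obtain d where b: "b = a + Suc d" using less_iff_Suc_add by auto
  show ?thesis unfolding b by (rule vandermonde_transpose_add) (use assms b in simp)
next
  case False
  then have "b < a" using assms(3) by simp
  then obtain d where a: "a = b + Suc d" using less_iff_Suc_add by auto
  show ?thesis unfolding a transpose_commute[of "b + Suc d" b]
    by (rule vandermonde_transpose_add) (use assms a in simp)
qed

lemma vandermonde_permute:
  assumes "\<sigma> permutes {..<n}"
  shows "vandermonde n (x \<circ> \<sigma>) = of_int (sign \<sigma>) * vandermonde n x"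
  using assms finite_lessThan[of n]
proof (induction \<sigma> arbitrary: x rule: permutes_induct)
  case (swap a b p)
  have "vandermonde n (x \<circ> (Transposition.transpose a b \<circ> p))
      = of_int (sign p) * vandermonde n (x \<circ> Transposition.transpose a b)"
    using swap.IH by (simp only: o_assoc)
  also have "\<dots> = - of_int (sign p) * vandermonde n x"
    using vandermonde_transpose[of a n b x] swap.hyps by simp
  also have "sign (Transposition.transpose a b \<circ> p) = - sign p"
  proof -
    have "permutation p" using swap.hyps(4) permutation_permutes by blast
    from sign_compose[OF permutation_swap_id this] show ?thesis using swap.hyps by (simp add: sign_swap_id)
  qed
  ultimately show ?case by (simp only:) simp
qed simp

lemma antisymmetric_vandermonde_Var:
  assumes "\<And>\<sigma> i. permvar \<sigma> (a i) = a (\<sigma> i)"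
  shows "antisymmetric n (vandermonde n (\<lambda>i. Var (a i)))"
  unfolding antisymmetric_def
proof (intro allI impI)
  fix \<sigma> assume \<sigma>: "\<sigma> permutes {..<n}"
  then have "permpoly \<sigma> (vandermonde n (\<lambda>i. Var (a i))) = vandermonde n ((\<lambda>i. Var (a i)) \<circ> \<sigma>)"
    unfolding vandermonde_def
    by (auto simp: permutes_bij permpoly_prod permpoly_diff permpoly_Var assms intro!: prod.cong)
  then show "permpoly \<sigma> (vandermonde n (\<lambda>i. Var (a i)))
      = const (of_int (sign \<sigma>)) * vandermonde n (\<lambda>i. Var (a i))"
    by (simp add: vandermonde_permute[OF \<sigma>] const_of_int)
qed

section \<open>Antisymmetrization\<close>

definition antisymmetrize :: "nat \<Rightarrow> cpoly \<Rightarrow> cpoly" where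
  "antisymmetrize n p = (\<Sum>\<sigma> | \<sigma> permutes {..<n}. const (of_int (sign \<sigma>)) * permpoly \<sigma> p)"

definition orbit_sum :: "nat \<Rightarrow> mono \<Rightarrow> cpoly" where
  "orbit_sum n m = (\<Sum>\<sigma> | \<sigma> permutes {..<n}. Poly_Mapping.single (permmono \<sigma> m) 1)"

lemma antisymmetrize_antisymmetric:
  assumes "antisymmetric n f"
  shows "antisymmetrize n f = const (of_nat (fact n)) * f"
proof -
  have "antisymmetrize n f = (\<Sum>\<sigma> | \<sigma> permutes {..<n}. f)"
    unfolding antisymmetrize_def
  proof (rule sum.cong[OF refl])
    fix \<sigma> assume "\<sigma> \<in> {\<sigma>. \<sigma> permutes {..<n}}"
    then have "permpoly \<sigma> f = const (of_int (sign \<sigma>)) * f"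
      using assms by (simp add: antisymmetric_def)
    then show "const (of_int (sign \<sigma>)) * permpoly \<sigma> f = f"
      by (simp add: mult.assoc[symmetric] const_mult_const flip: of_int_mult)
  qed
  also have "\<dots> = of_nat (fact n) * f"
    by (simp add: card_permutations)
  finally show ?thesis by (simp only: const_of_nat)
qed

lemma antisymmetrize_dmono:
  assumes "antisymmetric n f"
  shows "antisymmetrize n (dmono m f) = diffop (orbit_sum n m) f"
proof -
  have "const (of_int (sign \<sigma>)) * permpoly \<sigma> (dmono m f) = dmono (permmono \<sigma> m) f"
    if \<sigma>: "\<sigma> permutes {..<n}" for \<sigma>
    using assms \<sigma>
    by (simp add: antisymmetric_def permutes_bij permpoly_dmono dmono_const_mult
        mult.assoc[symmetric] const_mult_const flip: of_int_mult)
  then show ?thesis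
    unfolding antisymmetrize_def orbit_sum_def diffop_sum diffop_single by simp
qed

lemma mdeg_pos: "m \<noteq> 0 \<Longrightarrow> mdeg m > 0"
proof -
  assume "m \<noteq> 0"
  then obtain v where v: "v \<in> Poly_Mapping.keys m" by (metis all_not_in_conv keys_eq_empty)
  then have "0 < Poly_Mapping.lookup m v" by (simp add: in_keys_iff)
  also have "\<dots> \<le> mdeg m" unfolding mdeg_def by (rule member_le_sum[OF v]) auto
  finally show ?thesis .
qed

lemma orbit_sum_symmetric: "symmetric n (orbit_sum n m)"
  unfolding symmetric_def
proof (intro allI impI)
  fix \<tau> assume \<tau>: "\<tau> permutes {..<n}"
  have "permpoly \<tau> (orbit_sum n m) = (\<Sum>\<sigma> | \<sigma> permutes {..<n}. Poly_Mapping.single (permmono (\<tau> \<circ> \<sigma>) m) 1)"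
    unfolding orbit_sum_def using \<tau>
    by (simp add: permutes_bij permpoly_sum permpoly_single permmono_permmono)
  also have "\<dots> = orbit_sum n m"
    unfolding orbit_sum_def by (rule setum_permutations_compose_left[OF \<tau>, symmetric])
  finally show "permpoly \<tau> (orbit_sum n m) = orbit_sum n m" .
qed

lemma keys_orbit_sum: "Poly_Mapping.keys (orbit_sum n m) \<subseteq> (\<lambda>\<sigma>. permmono \<sigma> m) ` {\<sigma>. \<sigma> permutes {..<n}}"
  unfolding orbit_sum_def using keys_sum by fastforce

lemma orbit_sum_in_sym_gens:
  assumes "m \<noteq> 0" "Poly_Mapping.keys m \<subseteq> vars_n n"
  shows "orbit_sum n m \<in> sym_gens n"
proof -
  have "Poly_Mapping.keys (permmono \<sigma> m) \<subseteq> vars_n n" if "\<sigma> permutes {..<n}" for \<sigma>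
    using that assms(2) by (auto simp: keys_permmono permutes_bij permvar_vars_n)
  then have "orbit_sum n m \<in> polys n"
    using keys_orbit_sum[of n m] unfolding polys_def vars_def by fastforce
  moreover have "homogeneous (mdeg m) (orbit_sum n m)"
    using keys_orbit_sum[of n m] unfolding homogeneous_def by (auto simp: mdeg_permmono permutes_bij)
  ultimately show ?thesis
    unfolding sym_gens_def using orbit_sum_symmetric mdeg_pos[OF assms(1)] by blast
qed

lemma sym_gens_subset_sym_ideal: "sym_gens n \<subseteq> sym_ideal n"
proof
  fix g assume "g \<in> sym_gens n"
  moreover have "(1::cpoly) \<in> polys n" by (simp add: polys_def vars_def)
  ultimately show "g \<in> sym_ideal n"
    unfolding sym_ideal_def by (intro CollectI exI[of _ "[(1, g)]"]) simp
qed

lemma antisymmetrize_dmono_DH: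
  assumes "f \<in> DH n" "antisymmetric n f" "m \<noteq> 0" "Poly_Mapping.keys m \<subseteq> vars_n n"
  shows "antisymmetrize n (dmono m f) = 0"
proof -
  have "orbit_sum n m \<in> sym_ideal n"
    using orbit_sum_in_sym_gens[OF assms(3,4)] sym_gens_subset_sym_ideal by blast
  then show ?thesis using assms(1,2) by (simp add: antisymmetrize_dmono DH_def)
qed

section \<open>Generation of the alternating diagonal harmonics\<close>

definition linear_op :: "(cpoly \<Rightarrow> cpoly) \<Rightarrow> bool" where
  "linear_op T \<longleftrightarrow> (\<forall>p q. T (p + q) = T p + T q) \<and> (\<forall>c p. T (const c * p) = const c * T p)"

definition equivariant_op :: "nat \<Rightarrow> (cpoly \<Rightarrow> cpoly) \<Rightarrow> bool" where
  "equivariant_op n T \<longleftrightarrow> (\<forall>\<sigma> p. \<sigma> permutes {..<n} \<longrightarrow> permpoly \<sigma> (T p) = T (permpoly \<sigma> p))"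

lemma linear_op_sum:
  assumes "linear_op T"
  shows "T (\<Sum>i\<in>I. f i) = (\<Sum>i\<in>I. T (f i))"
proof -
  have "T 0 = 0"
    using assms unfolding linear_op_def by (metis const_0 mult_zero_left)
  then show ?thesis
    using assms by (induction I rule: infinite_finite_induct) (simp_all add: linear_op_def)
qed

lemma linear_op_antisymmetrize: "linear_op (antisymmetrize n)"
  unfolding linear_op_def antisymmetrize_def
  by (simp add: permpoly_add permpoly_const_mult permutes_bij distrib_left sum.distrib
      sum_distrib_left mult.left_commute)

lemma antisymmetrize_commute:
  assumes "linear_op T" "equivariant_op n T"
  shows "antisymmetrize n (T p) = T (antisymmetrize n p)"
  using assms unfolding antisymmetrize_def equivariant_op_def
  by (simp add: linear_op_sum linear_op_def)

lemma generated_mono: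
  assumes "ops \<subseteq> ops'"
  shows "generated ops p0 \<subseteq> generated ops' p0"
proof
  fix p assume "p \<in> generated ops p0"
  then show "p \<in> generated ops' p0"
    by (induction p rule: generated.induct) (use assms in \<open>auto intro: generated.intros\<close>)
qed

lemma generated_antisymmetric:
  assumes "antisymmetric n f" "\<And>T. T \<in> G \<Longrightarrow> linear_op T \<and> equivariant_op n T"
  shows "p \<in> generated G f \<Longrightarrow> antisymmetric n p"
proof (induction p rule: generated.induct)
  case (op T p)
  then show ?case
    using assms(2) by (simp add: antisymmetric_def equivariant_op_def linear_op_def)
qed (use assms(1) in \<open>simp_all add: antisymmetric_def permpoly_add permpoly_const_mult permutes_bij
    distrib_left mult.left_commute\<close>)

inductive_set derivative_span :: "(cpoly \<Rightarrow> cpoly) set \<Rightarrow> nat \<Rightarrow> cpoly \<Rightarrow> cpoly set"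
  for G n f where
  deriv: "Poly_Mapping.keys m \<subseteq> vars_n n \<Longrightarrow> dmono m f \<in> derivative_span G n f"
| add: "p \<in> derivative_span G n f \<Longrightarrow> q \<in> derivative_span G n f \<Longrightarrow> p + q \<in> derivative_span G n f"
| smult: "p \<in> derivative_span G n f \<Longrightarrow> const c * p \<in> derivative_span G n f"
| oper: "T \<in> G \<Longrightarrow> p \<in> derivative_span G n f \<Longrightarrow> T p \<in> derivative_span G n f"

lemma pd_derivative_span:
  assumes v: "v \<in> vars_n n" and comm: "\<And>T p. T \<in> G \<Longrightarrow> pd v (T p) = T (pd v p)"
  shows "p \<in> derivative_span G n f \<Longrightarrow> pd v p \<in> derivative_span G n f"
proof (induction p rule: derivative_span.induct)
  case (deriv m)
  have "pd v (dmono m f) = dmono (Poly_Mapping.single v 1 + m) f"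
    by (simp add: pd_def dmono_dmono)
  moreover have "Poly_Mapping.keys (Poly_Mapping.single v 1 + m) \<subseteq> vars_n n"
    using keys_add[of "Poly_Mapping.single v 1" m] deriv v by auto
  ultimately show ?case by (simp add: derivative_span.deriv)
next
  case (oper T p)
  then show ?case by (simp add: comm derivative_span.oper)
qed (simp_all add: pd_def dmono_add dmono_const_mult derivative_span.add derivative_span.smult)

lemma generated_subset_derivative_span:
  assumes P: "\<And>D. D \<in> P \<Longrightarrow> \<exists>v\<in>vars_n n. D = pd v"
    and comm: "\<And>D T p. D \<in> P \<Longrightarrow> T \<in> G \<Longrightarrow> D (T p) = T (D p)"
  shows "generated (G \<union> P) f \<subseteq> derivative_span G n f"
proof
  fix p assume "p \<in> generated (G \<union> P) f"
  then show "p \<in> derivative_span G n f"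
  proof (induction p rule: generated.induct)
    case base
    show ?case using derivative_span.deriv[where m = 0] by (simp add: dmono_0)
  next
    case (op T p)
    show ?case
    proof (cases "T \<in> G")
      case True
      then show ?thesis using op.IH by (rule derivative_span.oper)
    next
      case False
      with op.hyps P obtain v where "v \<in> vars_n n" "T = pd v" by blast
      with op.IH comm \<open>T \<in> G \<union> P\<close> False show ?thesis
        using pd_derivative_span by blast
    qed
  qed (simp_all add: derivative_span.add derivative_span.smult)
qed

lemma antisymmetrize_derivative_span:
  assumes f: "f \<in> DH n" "antisymmetric n f"
    and G: "\<And>T. T \<in> G \<Longrightarrow> linear_op T \<and> equivariant_op n T"
  shows "p \<in> derivative_span G n f \<Longrightarrow> antisymmetrize n p \<in> generated G f"
proof (induction p rule: derivative_span.induct)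
  case (deriv m)
  show ?case
  proof (cases "m = 0")
    case True
    then show ?thesis
      using f(2) by (simp add: dmono_0 antisymmetrize_antisymmetric generated.smult generated.base)
  next
    case False
    then have "antisymmetrize n (dmono m f) = const 0 * f"
      using antisymmetrize_dmono_DH[OF f False deriv] by simp
    then show ?thesis by (simp only: generated.smult generated.base)
  qed
next
  case (oper T p)
  then show ?case
    using G antisymmetrize_commute generated.op by metis
qed (use linear_op_antisymmetrize in \<open>simp_all add: linear_op_def generated.add generated.smult\<close>)

lemma DH_sgn_eq_generated:
  assumes haiman: "DH n = generated (G \<union> P) f"
    and P: "\<And>D. D \<in> P \<Longrightarrow> \<exists>v\<in>vars_n n. D = pd v"
    and comm: "\<And>D T p. D \<in> P \<Longrightarrow> T \<in> G \<Longrightarrow> D (T p) = T (D p)"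
    and G: "\<And>T. T \<in> G \<Longrightarrow> linear_op T \<and> equivariant_op n T"
    and f: "antisymmetric n f"
  shows "DH_sgn n = generated G f"
proof
  have "f \<in> DH n" unfolding haiman by (rule generated.base)
  show "DH_sgn n \<subseteq> generated G f"
  proof
    fix p assume p: "p \<in> DH_sgn n"
    have "generated (G \<union> P) f \<subseteq> derivative_span G n f"
      by (rule generated_subset_derivative_span, fact P, fact comm)
    with p haiman have "p \<in> derivative_span G n f" by (auto simp: DH_sgn_def)
    then have "antisymmetrize n p \<in> generated G f"
      using antisymmetrize_derivative_span[of f n G p] \<open>f \<in> DH n\<close> f G by blast
    then have "const (1 / fact n) * antisymmetrize n p \<in> generated G f"
      by (rule generated.smult)
    moreover have "const (1 / fact n) * antisymmetrize n p = p"
      using p by (simp add: DH_sgn_def antisymmetrize_antisymmetric mult.assoc[symmetric] const_mult_const)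
    ultimately show "p \<in> generated G f" by simp
  qed
  show "generated G f \<subseteq> DH_sgn n"
    using generated_mono[of G "G \<union> P" f] generated_antisymmetric[OF f] G haiman
    by (auto simp: DH_sgn_def)
qed

section \<open>Polarization operators\<close>

definition polarization :: "(nat \<Rightarrow> var) \<Rightarrow> (nat \<Rightarrow> var) \<Rightarrow> nat \<Rightarrow> nat \<Rightarrow> cpoly \<Rightarrow> cpoly" where
  "polarization a b n k f = (\<Sum>i<n. Var (b i) * dmono (Poly_Mapping.single (a i) k) f)"

lemma Fstar_eq_polarization: "Fstar n k = polarization Inl Inr n k"
  by (simp add: fun_eq_iff Fstar_def polarization_def Y_def)

lemma Estar_eq_polarization: "Estar n k = polarization Inr Inl n k"
  by (simp add: fun_eq_iff Estar_def polarization_def X_def)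

lemma linear_op_polarization: "linear_op (polarization a b n k)"
  unfolding linear_op_def polarization_def
  by (simp add: dmono_add dmono_const_mult distrib_left sum.distrib sum_distrib_left mult.left_commute)

lemma equivariant_op_polarization:
  assumes "\<And>\<sigma> i. permvar \<sigma> (a i) = a (\<sigma> i)" "\<And>\<sigma> i. permvar \<sigma> (b i) = b (\<sigma> i)"
  shows "equivariant_op n (polarization a b n k)"
  unfolding equivariant_op_def
proof (intro allI impI)
  fix \<sigma> p assume \<sigma>: "\<sigma> permutes {..<n}"
  let ?term = "\<lambda>i. Var (b i) * dmono (Poly_Mapping.single (a i) k) (permpoly \<sigma> p)"
  have "permpoly \<sigma> (polarization a b n k p) = (\<Sum>i<n. ?term (\<sigma> i))"
    unfolding polarization_def using \<sigma>
    by (simp add: permutes_bij permpoly_sum permpoly_mult permpoly_Var permpoly_dmono permmono_single assms)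
  also have "\<dots> = polarization a b n k (permpoly \<sigma> p)"
    unfolding polarization_def using sum.reindex_bij_betw[OF permutes_imp_bij[OF \<sigma>], of ?term] .
  finally show "permpoly \<sigma> (polarization a b n k p) = polarization a b n k (permpoly \<sigma> p)" .
qed

lemma pd_polarization:
  assumes "v \<notin> range b"
  shows "pd v (polarization a b n k f) = polarization a b n k (pd v f)"
  unfolding pd_def polarization_def dmono_sum
proof (rule sum.cong[OF refl])
  fix i
  have "b i \<notin> Poly_Mapping.keys (Poly_Mapping.single v (1::nat))"
    using assms by auto
  then show "dmono (Poly_Mapping.single v 1) (Var (b i) * dmono (Poly_Mapping.single (a i) k) f)
      = Var (b i) * dmono (Poly_Mapping.single (a i) k) (dmono (Poly_Mapping.single v 1) f)"
    by (simp add: dmono_Var_mult dmono_dmono add.commute)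
qed

lemma DH_sgn_eq_generated_polarization:
  assumes "DH n = generated ({polarization a b n k | k. 1 \<le> k \<and> k \<le> n - 1} \<union> {pd (a i) | i. i < n})
                 (vandermonde n (\<lambda>i. Var (a i)))"
    and "\<And>\<sigma> i. permvar \<sigma> (a i) = a (\<sigma> i)" "\<And>\<sigma> i. permvar \<sigma> (b i) = b (\<sigma> i)"
    and "\<And>i j. a i \<noteq> b j" "\<And>i. i < n \<Longrightarrow> a i \<in> vars_n n"
  shows "DH_sgn n = generated {polarization a b n k | k. 1 \<le> k \<and> k \<le> n - 1}
                 (vandermonde n (\<lambda>i. Var (a i)))"
  using assms(1)
proof (rule DH_sgn_eq_generated)
  show "antisymmetric n (vandermonde n (\<lambda>i. Var (a i)))"
    using assms(2) by (rule antisymmetric_vandermonde_Var)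
next
  fix D T p
  assume "D \<in> {pd (a i) | i. i < n}" "T \<in> {polarization a b n k | k. 1 \<le> k \<and> k \<le> n - 1}"
  moreover have "a i \<notin> range b" for i
    using assms(4) by auto
  ultimately show "D (T p) = T (D p)"
    by (auto simp: pd_polarization)
qed (use assms(2,3,5) in \<open>auto simp: linear_op_polarization equivariant_op_polarization\<close>)

theorem corollary2p19:
  fixes n :: nat
  assumes haiman_x: "DH n = generated ({Fstar n k | k. 1 \<le> k \<and> k \<le> n - 1} \<union> {pd (Inl i) | i. i < n}) (Delta_x n)"
    and haiman_y: "DH n = generated ({Estar n k | k. 1 \<le> k \<and> k \<le> n - 1} \<union> {pd (Inr i) | i. i < n}) (Delta_y n)"
  shows "DH_sgn n = generated {Fstar n k | k. 1 \<le> k \<and> k \<le> n - 1} (Delta_x n)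
       \<and> DH_sgn n = generated {Estar n k | k. 1 \<le> k \<and> k \<le> n - 1} (Delta_y n)"
proof -
  have Delta: "Delta_x n = vandermonde n (\<lambda>i. Var (Inl i))" "Delta_y n = vandermonde n (\<lambda>i. Var (Inr i))"
    by (simp_all add: Delta_x_def Delta_y_def vandermonde_def X_def Y_def)
  have sides: "permvar \<sigma> (Inl i) = Inl (\<sigma> i)" "permvar \<sigma> (Inr i) = Inr (\<sigma> i)"
    "i < n \<Longrightarrow> Inl i \<in> vars_n n" "i < n \<Longrightarrow> Inr i \<in> vars_n n" for \<sigma> i
    by (simp_all add: permvar_def vars_n_def)
  have "DH_sgn n = generated {Fstar n k | k. 1 \<le> k \<and> k \<le> n - 1} (Delta_x n)"
    using haiman_x unfolding Delta Fstar_eq_polarization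
    by (rule DH_sgn_eq_generated_polarization) (simp_all add: sides)
  moreover have "DH_sgn n = generated {Estar n k | k. 1 \<le> k \<and> k \<le> n - 1} (Delta_y n)"
    using haiman_y unfolding Delta Estar_eq_polarization
    by (rule DH_sgn_eq_generated_polarization) (simp_all add: sides)
  ultimately show ?thesis ..
qed

end
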